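(* For all integers $n, m, k \ge 0$, the map $\phi$ defined below restricts to a bijection from the set of Dyck paths of semilength $n$ with $m$ contacts and $k$ up-steps at odd height onto the set of Dyck paths of semilength $n$ with $m$ contacts and $k$ peaks. Definition of $\phi:\mathcal D\to\mathcal D$ (on Dyck words): $\phi(\epsilon)=\epsilon$ for the empty word $\epsilon$. A nonempty Dyck word $W$ whose path has $s\ge 0$ down-steps at height $2$ before its first contact decomposes uniquely as $W = U\big(\prod_{i=1}^{s} U W_i D\big) D W_{s+1}$ with each $W_i$ a Dyck word, and then $$\phi(W) = \Big(\prod_{i=1}^{s} U\,\phi(W_i)\Big)\, U D\, D^{s}\, \phi(W_{s+1}).$$
   Context: Paths have steps $(1,1)$ (up-step, letter $U$) and $(1,-1)$ (down-step, letter $D$), start at $(0,0)$; paths and words in $\{U,D\}$ are identified. A Dyck path is such a path ending on the line $y=0$ with no vertex of negative $y$-coordinate; a Dyck word is the corresponding word (equal numbers of $U$ and $D$, no prefix with more $D$s than $U$s). $\mathcal D$ denotes the set of Dyck paths/words. The semilength of a path is half its number of steps. An up-step is at height $j$ if it goes from $(i-1,j-1)$ to $(i,j)$; a down-step is at height $j$ if it goes from $(i,j)$ to $(i+1,j-1)$; a step is at odd height if $j$ is odd. A peak is an up-step immediately followed by a down-step. A contact is a down-step at height $1$ or an up-step at height $0$. Products $\prod$ denote concatenation of words, $D^s$ is $s$ copies of $D$. *)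

theory Defs
  imports Main
begin

datatype step = U | D

type_synonym word = "step list"

definition ht :: "word \<Rightarrow> int" where
  "ht w = int (length (filter (\<lambda>x. x = U) w)) - int (length (filter (\<lambda>x. x = D) w))"

definition dyck :: "word \<Rightarrow> bool" where
  "dyck w \<longleftrightarrow> ht w = 0 \<and> (\<forall>i \<le> length w. ht (take i w) \<ge> 0)"

definition semilength :: "word \<Rightarrow> nat" where
  "semilength w = length w div 2"

text \<open>The step at position i (0-based) ends at height ht (take (Suc i) w).
  An up-step is at height j if it ends at height j; a down-step is at height j
  if it starts at height j, i.e. ends at height j - 1.\<close>
definition contacts :: "word \<Rightarrow> nat" where
  "contacts w = card {i. i < length w \<and>
      ((w ! i = D \<and> ht (take (Suc i) w) = 0) \<or> (w ! i = U \<and> ht (take (Suc i) w) = 0))}"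

definition odd_ups :: "word \<Rightarrow> nat" where
  "odd_ups w = card {i. i < length w \<and> w ! i = U \<and> odd (ht (take (Suc i) w))}"

definition peaks :: "word \<Rightarrow> nat" where
  "peaks w = card {i. Suc i < length w \<and> w ! i = U \<and> w ! Suc i = D}"

text \<open>fr h w: reading w starting at height h \<ge> 1, the number of steps read before
  the first down-step that goes from height 1 to 0.\<close>
fun fr :: "nat \<Rightarrow> word \<Rightarrow> nat" where
  "fr h [] = 0"
| "fr h (U # w) = Suc (fr (Suc h) w)"
| "fr 0 (D # w) = 0"
| "fr (Suc 0) (D # w) = 0"
| "fr (Suc (Suc h)) (D # w) = Suc (fr (Suc h) w)"

lemma fr_le: "fr h w \<le> length w"
  by (induction h w rule: fr.induct) auto

text \<open>For a Dyck word U # r, with n = fr 1 r, we have U # r = U A D W' where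
  A = take n r and W' = drop (Suc n) r are Dyck words.  The inner word A decomposes
  into primes A = prod_{i=1}^s U W_i D, where s is the number of down-steps at height 2
  before the first contact.  phi_seq A computes prod_{i=1}^s U phi(W_i).\<close>
function phi :: "word \<Rightarrow> word" and phi_seq :: "word \<Rightarrow> word" where
  "phi [] = []"
| "phi (D # r) = []"
| "phi (U # r) =
     (let n = fr 1 r; A = take n r; W' = drop (Suc n) r
      in phi_seq A @ [U, D] @ replicate (contacts A) D @ phi W')"
| "phi_seq [] = []"
| "phi_seq (D # r) = []"
| "phi_seq (U # r) =
     (let n = fr 1 r in U # phi (take n r) @ phi_seq (drop (Suc n) r))"
  by pat_completeness auto
termination
  by (relation "measure (case_sum length length)")
     (auto simp: Let_def less_Suc_eq_le fr_le)

end

theory Submission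
  imports Defs
begin

text \<open>
  A nonempty Dyck word factors at its first return as \<open>W = U A D B\<close> with \<open>A = \<Prod>U W\<^sub>i D\<close>,
  and \<open>\<phi> W = \<phi>_seq A @ U D D\<^sup>s @ \<phi> B\<close> with \<open>\<phi>_seq A = \<Prod>U \<phi> W\<^sub>i\<close>, where \<open>s\<close> is the number of
  contacts of \<open>A\<close>. Induction along this factorisation shows that \<open>\<phi> W\<close> is a Dyck path of the same
  length and with the same contacts as \<open>W\<close>, and that \<open>\<phi>_seq A\<close> stays strictly above the axis
  after its first step and ends at height \<open>s\<close>. The first step of \<open>W\<close>, an up-step at height 1,
  becomes the explicit peak \<open>U D\<close>; every other peak of \<open>\<phi> W\<close> is a peak of some \<open>\<phi> W\<^sub>i\<close> or of
  \<open>\<phi> B\<close>, and inside \<open>U W\<^sub>i D\<close> heights are shifted by 2, which keeps parities. So up-steps at odd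
  height become peaks.

  Conversely, \<open>\<phi> W\<close> is parsed back uniquely: its first return to the axis ends the block
  \<open>\<phi>_seq A @ U D\<^sup>s\<^sup>+\<^sup>1\<close>, whose last up-step separates \<open>\<phi>_seq A\<close>, and \<open>\<phi>_seq A\<close> splits after its
  first step at its last return to height 1. This gives injectivity, and running the same parse
  on an arbitrary Dyck path gives surjectivity.
\<close>

section \<open>Heights along a word\<close>

fun delta :: "step \<Rightarrow> int" where
  "delta U = 1"
| "delta D = -1"

lemma ht_Nil [simp]: "ht [] = 0"
  by (simp add: ht_def)

lemma ht_Cons [simp]: "ht (x # w) = delta x + ht w"
  by (cases x) (auto simp: ht_def)

lemma ht_append [simp]: "ht (xs @ ys) = ht xs + ht ys"
  by (induction xs) auto

lemma ht_replicate_D [simp]: "ht (replicate n D) = - int n"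
  by (induction n) auto

fun nonneg_from :: "int \<Rightarrow> word \<Rightarrow> bool" where
  "nonneg_from h [] \<longleftrightarrow> 0 \<le> h"
| "nonneg_from h (x # w) \<longleftrightarrow> 0 \<le> h \<and> nonneg_from (h + delta x) w"

fun returns :: "int \<Rightarrow> word \<Rightarrow> nat" where
  "returns h [] = 0"
| "returns h (x # w) = (if h + delta x = 0 then 1 else 0) + returns (h + delta x) w"

fun odd_ups_from :: "int \<Rightarrow> word \<Rightarrow> nat" where
  "odd_ups_from h [] = 0"
| "odd_ups_from h (x # w) = (if x = U \<and> odd (h + 1) then 1 else 0) + odd_ups_from (h + delta x) w"

lemma nonneg_from_start: "nonneg_from h w \<Longrightarrow> 0 \<le> h"
  by (cases w) auto

lemma nonneg_from_append:
  "nonneg_from h (xs @ ys) \<longleftrightarrow> nonneg_from h xs \<and> nonneg_from (h + ht xs) ys"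
  by (induction xs arbitrary: h) (auto simp: nonneg_from_start add.assoc)

lemma nonneg_from_mono: "nonneg_from h w \<Longrightarrow> h \<le> h' \<Longrightarrow> nonneg_from h' w"
  by (induction w arbitrary: h h') fastforce+

lemma nonneg_from_replicate_D: "nonneg_from (int n) (replicate n D)"
  by (induction n) auto

lemma nonneg_from_0_hd: "nonneg_from 0 w \<Longrightarrow> w \<noteq> [] \<Longrightarrow> hd w = U"
  by (cases w; cases "hd w") (auto dest: nonneg_from_start)

lemma nonneg_from_iff_prefixes:
  "nonneg_from h w \<longleftrightarrow> (\<forall>i \<le> length w. 0 \<le> h + ht (take i w))"
proof (induction w arbitrary: h)
  case (Cons x w)
  have "(\<forall>i \<le> length (x # w). 0 \<le> h + ht (take i (x # w))) \<longleftrightarrow>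
        0 \<le> h \<and> (\<forall>i \<le> length w. 0 \<le> (h + delta x) + ht (take i w))"
    by (simp only: length_Cons less_Suc_eq_le[symmetric] All_less_Suc2) (simp add: add.assoc)
  then show ?case
    using Cons.IH by simp
qed simp

lemma returns_append: "returns h (xs @ ys) = returns h xs + returns (h + ht xs) ys"
  by (induction xs arbitrary: h) (auto simp: add.assoc)

lemma odd_ups_from_append:
  "odd_ups_from h (xs @ ys) = odd_ups_from h xs + odd_ups_from (h + ht xs) ys"
  by (induction xs arbitrary: h) (auto simp: add.assoc)

lemma odd_ups_from_add_2: "odd_ups_from (h + 2) w = odd_ups_from h w"
proof (induction w arbitrary: h)
  case (Cons x w)
  then show ?case
    using Cons.IH[of "h + delta x"] by (simp add: ac_simps)
qed simp

lemma returns_above: "nonneg_from (h - 1) w \<Longrightarrow> 1 \<le> h \<Longrightarrow> returns h w = 0"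
proof (induction w arbitrary: h)
  case (Cons x w)
  then show ?case
    using nonneg_from_start[of "h + delta x - 1" w] by (simp add: algebra_simps)
qed simp

lemma nonneg_from_lower:
  "1 \<le> h \<Longrightarrow> nonneg_from h w \<Longrightarrow> returns h w = 0 \<Longrightarrow> nonneg_from (h - 1) w"
proof (induction w arbitrary: h)
  case (Cons x w)
  then have "nonneg_from (h + delta x - 1) w"
    using nonneg_from_start by (force split: if_splits)
  then show ?case
    using Cons.prems by (simp add: algebra_simps)
qed simp

lemma returns_replicate_D: "returns (int n) (replicate n D) = (if n = 0 then 0 else 1)"
  by (induction n) auto

lemma returns_pos: "ht w = 0 \<Longrightarrow> w \<noteq> [] \<Longrightarrow> 0 < returns 0 w"
  by (induction w rule: rev_induct) (auto simp: returns_append)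

section \<open>The statistics as recursive counts\<close>

lemma card_Collect_less_Suc:
  "card {i. i < Suc n \<and> P i} = (if P 0 then 1 else 0) + card {i. i < n \<and> P (Suc i)}"
proof -
  have "{i. i < Suc n \<and> P i} = {i. i = 0 \<and> P 0} \<union> Suc ` {i. i < n \<and> P (Suc i)}"
    by (auto simp: less_Suc_eq_0_disj)
  moreover have "card (Suc ` {i. i < n \<and> P (Suc i)}) = card {i. i < n \<and> P (Suc i)}"
    by (rule card_image) auto
  moreover have "card {i::nat. i = 0 \<and> P 0} = (if P 0 then 1 else 0)"
    by auto
  ultimately show ?thesis
    by (simp add: card_Un_disjoint)
qed

lemma card_returns:
  "card {i. i < length w \<and> h + ht (take (Suc i) w) = 0} = returns h w"
proof (induction w arbitrary: h)
  case (Cons x w)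
  have "{i. i < length w \<and> h + ht (take (Suc (Suc i)) (x # w)) = 0}
      = {i. i < length w \<and> (h + delta x) + ht (take (Suc i) w) = 0}"
    by (auto simp: algebra_simps)
  then show ?case
    using Cons.IH[of "h + delta x"] by (simp only: length_Cons card_Collect_less_Suc) simp
qed simp

lemma contacts_eq_returns: "contacts w = returns 0 w"
proof -
  have "{i. i < length w \<and> (w ! i = D \<and> ht (take (Suc i) w) = 0 \<or> w ! i = U \<and> ht (take (Suc i) w) = 0)}
      = {i. i < length w \<and> 0 + ht (take (Suc i) w) = 0}"
    by (auto intro: step.exhaust)
  then show ?thesis
    unfolding contacts_def using card_returns[of w 0] by simp
qed

lemma card_odd_ups_from:
  "card {i. i < length w \<and> w ! i = U \<and> odd (h + ht (take (Suc i) w))} = odd_ups_from h w"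
proof (induction w arbitrary: h)
  case (Cons x w)
  have "{i. i < length w \<and> (x # w) ! Suc i = U \<and> odd (h + ht (take (Suc (Suc i)) (x # w)))}
      = {i. i < length w \<and> w ! i = U \<and> odd ((h + delta x) + ht (take (Suc i) w))}"
    by (auto simp: algebra_simps)
  moreover have "(x = U \<and> odd (h + delta x)) = (x = U \<and> odd (h + 1))"
    by auto
  ultimately show ?case
    using Cons.IH[of "h + delta x"] by (simp only: length_Cons card_Collect_less_Suc) simp
qed simp

lemma odd_ups_eq_odd_ups_from: "odd_ups w = odd_ups_from 0 w"
  using card_odd_ups_from[of w 0] unfolding odd_ups_def by simp

lemma peaks_Nil [simp]: "peaks [] = 0"
  by (simp add: peaks_def)

lemma peaks_Cons:
  "peaks (x # w) = (if w \<noteq> [] \<and> x = U \<and> hd w = D then 1 else 0) + peaks w"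
proof -
  have peaks_card: "peaks v = card {i. i < length v \<and> Suc i < length v \<and> v ! i = U \<and> v ! Suc i = D}"
    for v
    unfolding peaks_def by (rule arg_cong[where f = card]) auto
  have "(Suc 0 < length (x # w) \<and> (x # w) ! 0 = U \<and> (x # w) ! Suc 0 = D)
      = (w \<noteq> [] \<and> x = U \<and> hd w = D)"
    by (cases w) auto
  then show ?thesis
    by (simp only: peaks_card length_Cons card_Collect_less_Suc) simp
qed

lemma peaks_append:
  "peaks (xs @ ys) = peaks xs + peaks ys +
     (if xs \<noteq> [] \<and> ys \<noteq> [] \<and> last xs = U \<and> hd ys = D then 1 else 0)"
  by (induction xs) (auto simp: peaks_Cons)

lemma peaks_append_nonneg: "nonneg_from 0 ys \<Longrightarrow> peaks (xs @ ys) = peaks xs + peaks ys"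
  using nonneg_from_0_hd[of ys] by (auto simp: peaks_append)

lemma peaks_replicate_D_append: "peaks (replicate n D @ w) = peaks w"
  by (induction n) (auto simp: peaks_Cons)

section \<open>Dyck words by first-return decomposition\<close>

inductive balanced :: "word \<Rightarrow> bool" where
  balanced_Nil: "balanced []"
| balanced_Cons: "balanced A \<Longrightarrow> balanced B \<Longrightarrow> balanced (U # A @ D # B)"

lemma balanced_ht_nonneg: "balanced w \<Longrightarrow> ht w = 0 \<and> nonneg_from 0 w"
proof (induction rule: balanced.induct)
  case (balanced_Cons A B)
  then have "nonneg_from 1 A"
    using nonneg_from_mono by fastforce
  with balanced_Cons show ?case
    by (simp add: nonneg_from_append)
qed simp

lemma first_return:
  assumes "1 \<le> h" "nonneg_from h r" "h + ht r = 0"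
  shows "\<exists>A B. r = A @ D # B \<and> nonneg_from (h - 1) A \<and> h + ht A = 1 \<and> nonneg_from 0 B \<and> ht B = 0"
  using assms
proof (induction r arbitrary: h)
  case (Cons x r)
  show ?case
  proof (cases "x = D \<and> h = 1")
    case True
    with Cons.prems show ?thesis
      by (intro exI[of _ "[]"] exI[of _ r]) auto
  next
    case False
    with Cons.prems have "1 \<le> h + delta x" "nonneg_from (h + delta x) r" "h + delta x + ht r = 0"
      using nonneg_from_start[of "h + delta x" r] by (cases x; auto simp: algebra_simps)+
    from Cons.IH[OF this] obtain A B where
      "r = A @ D # B" "nonneg_from (h + delta x - 1) A" "h + delta x + ht A = 1"
      "nonneg_from 0 B" "ht B = 0"
      by blast
    with Cons.prems show ?thesis
      by (intro exI[of _ "x # A"] exI[of _ B]) (auto simp: algebra_simps)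
  qed
qed simp

lemma balanced_if_ht_nonneg: "ht w = 0 \<Longrightarrow> nonneg_from 0 w \<Longrightarrow> balanced w"
proof (induction "length w" arbitrary: w rule: less_induct)
  case less
  show ?case
  proof (cases w)
    case (Cons x r)
    with less.prems have "x = U"
      by (cases x) (auto dest: nonneg_from_start)
    with less.prems Cons obtain A B where
      "r = A @ D # B" "nonneg_from 0 A" "ht A = 0" "nonneg_from 0 B" "ht B = 0"
      using first_return[of 1 r] by auto
    with less.hyps Cons \<open>x = U\<close> show ?thesis
      by (auto intro: balanced_Cons)
  qed (simp add: balanced_Nil)
qed

lemma dyck_iff_balanced: "dyck w \<longleftrightarrow> balanced w"
  using balanced_if_ht_nonneg balanced_ht_nonneg nonneg_from_iff_prefixes[of 0 w]
  unfolding dyck_def by auto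

lemma returns_balanced_Cons: "balanced A \<Longrightarrow> returns 0 (U # A @ D # B) = Suc (returns 0 B)"
  using balanced_ht_nonneg[of A] returns_above[of 1 A] by (simp add: returns_append)

lemma odd_ups_from_balanced_Cons:
  "balanced A \<Longrightarrow>
   odd_ups_from h (U # A @ D # B) = (if even h then 1 else 0) + odd_ups_from (h + 1) A + odd_ups_from h B"
  using balanced_ht_nonneg[of A] by (simp add: odd_ups_from_append)

lemma fr_balanced_append: "balanced A \<Longrightarrow> fr (Suc h) (A @ v) = length A + fr (Suc h) v"
proof (induction arbitrary: h v rule: balanced.induct)
  case (balanced_Cons A B)
  then show ?case
    using balanced_Cons.IH(1)[of "Suc h" "D # B @ v"] by simp
qed simp

lemma phi_balanced_Cons [simp]:
  "balanced A \<Longrightarrow> phi (U # A @ D # B) = phi_seq A @ [U, D] @ replicate (returns 0 A) D @ phi B"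
  using fr_balanced_append[of A 0 "D # B"] by (simp add: Let_def contacts_eq_returns)

lemma phi_seq_balanced_Cons [simp]:
  "balanced A \<Longrightarrow> phi_seq (U # A @ D # B) = U # phi A @ phi_seq B"
  using fr_balanced_append[of A 0 "D # B"] by (simp add: Let_def)

text \<open>On balanced words the two equations above replace the defining ones, which locate the
  first return through \<open>fr\<close>.\<close>

declare phi.simps(3) [simp del] phi_seq.simps(3) [simp del]

section \<open>Invariants of \<open>\<phi>\<close>\<close>

lemma length_phi:
  "balanced w \<Longrightarrow> length (phi w) = length w \<and> length (phi_seq w) + returns 0 w = length w"
proof (induction rule: balanced.induct)
  case (balanced_Cons A B)
  then show ?case
    unfolding phi_balanced_Cons[OF balanced_Cons.hyps(1)] phi_seq_balanced_Cons[OF balanced_Cons.hyps(1)]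
      returns_balanced_Cons[OF balanced_Cons.hyps(1)]
    by simp
qed simp

lemma phi_shape:
  "balanced w \<Longrightarrow>
     (ht (phi w) = 0 \<and> nonneg_from 0 (phi w) \<and> returns 0 (phi w) = returns 0 w) \<and>
     (ht (phi_seq w) = int (returns 0 w) \<and> nonneg_from 0 (phi_seq w) \<and> returns 0 (phi_seq w) = 0)"
proof (induction rule: balanced.induct)
  case (balanced_Cons A B)
  let ?s = "returns 0 A"
  have "returns (int ?s) (U # D # replicate ?s D) = 1"
    using returns_replicate_D[of ?s] by simp
  then have "ht (phi (U # A @ D # B)) = 0 \<and> nonneg_from 0 (phi (U # A @ D # B)) \<and>
      returns 0 (phi (U # A @ D # B)) = returns 0 (U # A @ D # B)"
    using balanced_Cons.IH nonneg_from_replicate_D[of ?s]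
      returns_append[of "int ?s" "U # D # replicate ?s D"]
    unfolding phi_balanced_Cons[OF balanced_Cons.hyps(1)] returns_balanced_Cons[OF balanced_Cons.hyps(1)]
    by (simp add: nonneg_from_append returns_append)
  moreover have "nonneg_from 1 (phi A)" "nonneg_from 1 (phi_seq B)"
    using balanced_Cons.IH nonneg_from_mono by fastforce+
  then have "ht (phi_seq (U # A @ D # B)) = int (returns 0 (U # A @ D # B)) \<and>
      nonneg_from 0 (phi_seq (U # A @ D # B)) \<and> returns 0 (phi_seq (U # A @ D # B)) = 0"
    using balanced_Cons.IH returns_above[of 1 "phi A"] returns_above[of 1 "phi_seq B"]
    unfolding phi_seq_balanced_Cons[OF balanced_Cons.hyps(1)] returns_balanced_Cons[OF balanced_Cons.hyps(1)]
    by (simp add: nonneg_from_append returns_append)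
  ultimately show ?case
    by blast
qed simp

lemma peaks_phi:
  "balanced w \<Longrightarrow> peaks (phi w) = odd_ups_from 0 w \<and> peaks (phi_seq w) = odd_ups_from 1 w"
proof (induction rule: balanced.induct)
  case (balanced_Cons A B)
  have "nonneg_from 0 (phi A @ phi_seq B)" "nonneg_from 0 (phi_seq B)"
    using phi_shape[OF balanced_Cons.hyps(1)] phi_shape[OF balanced_Cons.hyps(2)]
    by (simp_all add: nonneg_from_append)
  then have "peaks (phi_seq (U # A @ D # B)) = peaks (phi A) + peaks (phi_seq B)"
    using peaks_append_nonneg[of "phi A @ phi_seq B" "[U]"] peaks_append_nonneg[of "phi_seq B" "phi A"]
    unfolding phi_seq_balanced_Cons[OF balanced_Cons.hyps(1)] by (simp add: peaks_Cons)
  moreover have "peaks ([U, D] @ replicate (returns 0 A) D @ phi B) = 1 + peaks (phi B)"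
    by (simp add: peaks_Cons peaks_replicate_D_append)
  then have "peaks (phi (U # A @ D # B)) = peaks (phi_seq A) + 1 + peaks (phi B)"
    unfolding phi_balanced_Cons[OF balanced_Cons.hyps(1)]
    by (subst peaks_append) simp
  ultimately show ?case
    using balanced_Cons.IH odd_ups_from_add_2[of 0 A]
    unfolding odd_ups_from_balanced_Cons[OF balanced_Cons.hyps(1)]
    by simp
qed simp

section \<open>Injectivity\<close>

lemma level_prefix_unique:
  assumes "P @ R = P' @ R'" "ht P = 0" "ht P' = 0" "returns 0 P = returns 0 P'"
  shows "P = P' \<and> R = R'"
proof -
  have no_extension: "Q = []"
    if "P @ Q = P'" "ht P = 0" "ht P' = 0" "returns 0 P = returns 0 P'" for P P' Q :: word
    using that returns_pos[of Q] by (cases "Q = []") (auto simp: returns_append)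
  from assms(1) obtain Q where "P = P' @ Q \<and> R' = Q @ R \<or> P @ Q = P' \<and> R = Q @ R'"
    by (auto simp: append_eq_append_conv2)
  then show ?thesis
  proof
    assume "P = P' @ Q \<and> R' = Q @ R"
    with no_extension[of P' Q P] assms(2-4) show ?thesis by simp
  next
    assume "P @ Q = P' \<and> R = Q @ R'"
    with no_extension[of P Q P'] assms(2-4) show ?thesis by simp
  qed
qed

lemma replicate_D_U_unique:
  "replicate a D @ U # Y = replicate b D @ U # Y' \<Longrightarrow> a = b \<and> Y = Y'"
  by (induction a arbitrary: b) (case_tac b; auto)+

lemma last_U_unique: "X @ U # replicate a D = X' @ U # replicate b D \<Longrightarrow> X = X' \<and> a = b"
proof -
  assume "X @ U # replicate a D = X' @ U # replicate b D"
  then have "rev (X @ U # replicate a D) = rev (X' @ U # replicate b D)"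
    by simp
  then have "replicate a D @ U # rev X = replicate b D @ U # rev X'"
    by simp
  then show ?thesis
    by (auto dest: replicate_D_U_unique)
qed

lemma phi_eq_Nil_iff: "balanced w \<Longrightarrow> phi w = [] \<longleftrightarrow> w = []"
  using length_phi[of w] by auto

lemma phi_seq_eq_Nil_iff: "balanced w \<Longrightarrow> phi_seq w = [] \<longleftrightarrow> w = []"
  by (induction rule: balanced.induct) simp_all

lemma phi_balanced_Cons_cancel:
  assumes "balanced A" "balanced A'" "phi (U # A' @ D # B') = phi (U # A @ D # B)"
  shows "phi_seq A' = phi_seq A \<and> phi B' = phi B"
proof -
  let ?block = "\<lambda>A. phi_seq A @ U # replicate (Suc (returns 0 A)) D"
  have block_level: "ht (?block A) = 0 \<and> returns 0 (?block A) = 1" if "balanced A" for A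
    using phi_shape[OF that] returns_replicate_D[of "Suc (returns 0 A)"]
    by (simp add: returns_append)
  from assms have "?block A' @ phi B' = ?block A @ phi B"
    by simp
  then have "?block A' = ?block A \<and> phi B' = phi B"
    using block_level[OF \<open>balanced A\<close>] block_level[OF \<open>balanced A'\<close>]
    by (intro level_prefix_unique) simp_all
  then show ?thesis
    using last_U_unique by blast
qed

lemma phi_seq_balanced_Cons_cancel:
  assumes "balanced A" "balanced A'" "balanced B" "balanced B'"
    and "phi_seq (U # A' @ D # B') = phi_seq (U # A @ D # B)"
  shows "phi A' = phi A \<and> phi_seq B' = phi_seq B"
proof -
  from assms have eq: "phi A' @ phi_seq B' = phi A @ phi_seq B"
    by simp
  moreover have "returns 0 (phi A' @ phi_seq B') = returns 0 (phi A')"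
    "returns 0 (phi A @ phi_seq B) = returns 0 (phi A)"
    using phi_shape assms(1-4) by (simp_all add: returns_append)
  ultimately show ?thesis
    using phi_shape[OF \<open>balanced A\<close>] phi_shape[OF \<open>balanced A'\<close>]
    by (intro level_prefix_unique[OF eq]) simp_all
qed

lemma phi_inj:
  "balanced w \<Longrightarrow>
     (\<forall>w'. balanced w' \<longrightarrow> phi w' = phi w \<longrightarrow> w' = w) \<and>
     (\<forall>w'. balanced w' \<longrightarrow> phi_seq w' = phi_seq w \<longrightarrow> w' = w)"
proof (induction rule: balanced.induct)
  case balanced_Nil
  then show ?case
    using phi_eq_Nil_iff phi_seq_eq_Nil_iff by simp
next
  case (balanced_Cons A B)
  have nonempty: "phi (U # A @ D # B) \<noteq> []" "phi_seq (U # A @ D # B) \<noteq> []"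
    using balanced_Cons.hyps by (simp_all add: phi_eq_Nil_iff balanced.balanced_Cons)
  show ?case
  proof (intro conjI allI impI)
    fix w' assume "balanced w'" and eq: "phi w' = phi (U # A @ D # B)"
    then show "w' = U # A @ D # B"
    proof cases
      case (balanced_Cons A' B')
      with eq have "phi_seq A' = phi_seq A \<and> phi B' = phi B"
        by (intro phi_balanced_Cons_cancel[OF \<open>balanced A\<close>]) simp_all
      with balanced_Cons.IH balanced_Cons show ?thesis
        by blast
    qed (use eq nonempty in simp)
  next
    fix w' assume "balanced w'" and eq: "phi_seq w' = phi_seq (U # A @ D # B)"
    then show "w' = U # A @ D # B"
    proof cases
      case (balanced_Cons A' B')
      with eq have "phi A' = phi A \<and> phi_seq B' = phi_seq B"
        by (intro phi_seq_balanced_Cons_cancel[OF \<open>balanced A\<close> _ \<open>balanced B\<close>]) simp_all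
      with balanced_Cons.IH balanced_Cons show ?thesis
        by blast
    qed (use eq nonempty in simp)
  qed
qed

section \<open>Surjectivity\<close>

lemma last_U_split: "U \<in> set w \<Longrightarrow> \<exists>X t. w = X @ U # replicate t D"
proof -
  assume "U \<in> set w"
  then obtain X Z where "w = X @ U # Z" "U \<notin> set Z"
    using split_list_last by metis
  moreover have "Z = replicate (length Z) D"
    using \<open>U \<notin> set Z\<close> by (metis replicate_length_same step.exhaust)
  ultimately show ?thesis
    by metis
qed

lemma balanced_last_U_split:
  assumes "balanced M"
  obtains Y s where "U # M = Y @ U # replicate s D"
    and "ht Y = int s" "nonneg_from 0 Y" "returns 0 Y = 0"
proof -
  obtain Y s where Y: "U # M = Y @ U # replicate s D"
    using last_U_split[of "U # M"] by auto
  have "ht (U # M) = 1" "nonneg_from 0 (U # M)" "returns 0 (U # M) = 0"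
    using balanced_ht_nonneg[OF assms] returns_above[of 1 M] nonneg_from_mono[of 0 M 1]
    by simp_all
  then have "ht Y = int s" "nonneg_from 0 Y" "returns 0 Y = 0"
    unfolding Y by (simp_all add: nonneg_from_append returns_append)
  with Y that show ?thesis
    by blast
qed

lemma last_return_split:
  "nonneg_from 0 w \<Longrightarrow>
     \<exists>X R. w = X @ R \<and> balanced X \<and> nonneg_from 0 R \<and> returns 0 R = 0"
proof (induction w rule: rev_induct)
  case Nil
  then show ?case
    using balanced_Nil by auto
next
  case (snoc x w)
  then obtain X R where XR: "w = X @ R" "balanced X" "nonneg_from 0 R" "returns 0 R = 0"
    by (auto simp: nonneg_from_append)
  show ?case
  proof (cases "ht (R @ [x]) = 0")
    case True
    with XR snoc.prems have "balanced (X @ R @ [x])"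
      by (intro balanced_if_ht_nonneg) (simp_all add: balanced_ht_nonneg)
    then show ?thesis
      using XR by (intro exI[of _ "X @ R @ [x]"] exI[of _ "[]"]) simp
  next
    case False
    with XR snoc.prems show ?thesis
      by (intro exI[of _ X] exI[of _ "R @ [x]"]) (simp add: nonneg_from_append returns_append balanced_ht_nonneg)
  qed
qed

lemma phi_surj:
  "(balanced v \<longrightarrow> (\<exists>w. balanced w \<and> phi w = v)) \<and>
   (nonneg_from 0 v \<and> returns 0 v = 0 \<longrightarrow> (\<exists>A. balanced A \<and> phi_seq A = v))"
proof (induction "length v" arbitrary: v rule: less_induct)
  case less
  show ?case
  proof (intro conjI impI)
    assume "balanced v"
    then show "\<exists>w. balanced w \<and> phi w = v"
    proof cases
      case balanced_Nil
      then show ?thesis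
        using balanced.balanced_Nil by auto
    next
      case (balanced_Cons M B)
      obtain Y s where Y: "U # M = Y @ U # replicate s D"
        and "ht Y = int s" "nonneg_from 0 Y" "returns 0 Y = 0"
        using balanced_last_U_split[OF \<open>balanced M\<close>] .
      moreover have "length Y < length v"
        using \<open>v = _\<close> arg_cong[OF Y, of length] by simp
      ultimately obtain A where A: "balanced A" "phi_seq A = Y"
        using less.hyps[of Y] by blast
      have "returns 0 A = s"
        using phi_shape[OF \<open>balanced A\<close>] A \<open>ht Y = int s\<close> by simp
      obtain w' where "balanced w'" "phi w' = B"
        using less.hyps[of B] \<open>v = _\<close> \<open>balanced B\<close> by auto
      with A \<open>returns 0 A = s\<close> Y \<open>v = _\<close> have "phi (U # A @ D # w') = v"
        by (simp add: replicate_append_same[symmetric])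
      then show ?thesis
        using balanced.balanced_Cons[OF A(1) \<open>balanced w'\<close>] by blast
    qed
  next
    assume v: "nonneg_from 0 v \<and> returns 0 v = 0"
    show "\<exists>A. balanced A \<and> phi_seq A = v"
    proof (cases v)
      case Nil
      then show ?thesis
        using balanced_Nil by auto
    next
      case (Cons x Y)
      with v have "x = U"
        using nonneg_from_0_hd by fastforce
      with v Cons have "nonneg_from 0 Y"
        using nonneg_from_lower[of 1 Y] by (simp split: if_splits)
      then obtain X R where XR: "Y = X @ R" "balanced X" "nonneg_from 0 R" "returns 0 R = 0"
        using last_return_split by blast
      obtain w where "balanced w" "phi w = X"
        using less.hyps[of X] XR Cons by auto
      moreover obtain A where "balanced A" "phi_seq A = R"
        using less.hyps[of R] XR Cons by auto
      ultimately have "phi_seq (U # w @ D # A) = v"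
        using XR Cons \<open>x = U\<close> by simp
      then show ?thesis
        using balanced.balanced_Cons[OF \<open>balanced w\<close> \<open>balanced A\<close>] by blast
    qed
  qed
qed

theorem theorem1:
  fixes n m k :: nat
  shows "bij_betw phi
     {w. dyck w \<and> semilength w = n \<and> contacts w = m \<and> odd_ups w = k}
     {w. dyck w \<and> semilength w = n \<and> contacts w = m \<and> peaks w = k}"
proof -
  have phi_stats: "balanced (phi w) \<and> semilength (phi w) = semilength w \<and>
      contacts (phi w) = contacts w \<and> peaks (phi w) = odd_ups w" if "balanced w" for w
    using phi_shape[OF that] length_phi[OF that] peaks_phi[OF that] balanced_if_ht_nonneg
    by (simp add: semilength_def contacts_eq_returns odd_ups_eq_odd_ups_from)
  have "inj_on phi (Collect balanced)"
    using phi_inj by (auto intro: inj_onI)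
  moreover have "v \<in> phi ` {w. balanced w \<and> semilength w = n \<and> contacts w = m \<and> odd_ups w = k}"
    if "balanced v" "semilength v = n" "contacts v = m" "peaks v = k" for v
    using phi_surj[of v] phi_stats that by force
  ultimately show ?thesis
    unfolding bij_betw_def dyck_iff_balanced using phi_stats
    by (auto intro: inj_on_subset simp: image_iff)
qed

end
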